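(* Let $m\ge 2$, $\rho\ge 0$, and consider the Mallows culture on candidates $\{1,\dots,m\}$ with reference ranking $(m,m-1,\dots,1)$ (candidate $m$ first) and concentration parameter $\rho$. With $\boldsymbol\beta=(\frac12,\dots,\frac12)$, the log saddle point is \[ \boldsymbol\tau=\Big(\frac{m\rho}{2},\frac{(m-2)\rho}{2},\dots,\frac{(-m+4)\rho}{2}\Big), \] i.e. $\tau_j=\frac{(m-2(j-1))\rho}{2}$ for $j=1,\dots,m-1$.
   Context: Mallows culture with reference ranking $r_0$ and parameter $\rho\ge0$: a ranking $r$ has probability $p_r=\gamma e^{-\rho d(r,r_0)}$ where $d$ is the Kendall tau distance (number of pairs of candidates ordered differently in $r$ and $r_0$) and $\gamma$ normalizes $\sum_rp_r=1$. Let $\mathcal{A}=\{1,\dots,m-1\}$; for $\mathcal{X}\subseteq\mathcal{A}$, $p_{\mathcal{X}}$ is the probability that the set of candidates ranked above $m$ is exactly $\mathcal{X}$, and $P(\mathbf{x})=\sum_{\mathcal{X}\subseteq\mathcal{A}}p_{\mathcal{X}}\prod_{j\in\mathcal{X}}x_j$. With $K(\mathbf{t})=\log P(e^{t_1},\dots,e^{t_{m-1}})$, the log saddle point $\boldsymbol\tau$ is the unique maximizer over $\mathbb{R}^{m-1}$ of $-K(\mathbf{t})+\boldsymbol\beta^T\mathbf{t}$. *)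

theory Defs
  imports Complex_Main "HOL-Combinatorics.Permutations"
begin

text \<open>Candidates are 1..m. A ranking r is a permutation of {1..m}; r c is the
position of candidate c (position 1 = top).\<close>

definition rankings :: "nat \<Rightarrow> (nat \<Rightarrow> nat) set" where
  "rankings m = {r. r permutes {1..m}}"

definition kendall_tau :: "nat \<Rightarrow> (nat \<Rightarrow> nat) \<Rightarrow> (nat \<Rightarrow> nat) \<Rightarrow> nat" where
  "kendall_tau m r s =
     card {(a, b). a \<in> {1..m} \<and> b \<in> {1..m} \<and> a < b \<and> ((r a < r b) \<noteq> (s a < s b))}"

definition mallows_prob :: "nat \<Rightarrow> (nat \<Rightarrow> nat) \<Rightarrow> real \<Rightarrow> (nat \<Rightarrow> nat) \<Rightarrow> real" where
  "mallows_prob m r0 \<rho> r =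
     exp (- \<rho> * real (kendall_tau m r r0)) /
     (\<Sum>s\<in>rankings m. exp (- \<rho> * real (kendall_tau m s r0)))"

definition above_m :: "nat \<Rightarrow> (nat \<Rightarrow> nat) \<Rightarrow> nat set" where
  "above_m m r = {c \<in> {1..m-1}. r c < r m}"

definition p_set :: "nat \<Rightarrow> (nat \<Rightarrow> nat) \<Rightarrow> real \<Rightarrow> nat set \<Rightarrow> real" where
  "p_set m r0 \<rho> X = (\<Sum>r\<in>{r \<in> rankings m. above_m m r = X}. mallows_prob m r0 \<rho> r)"

definition gen_poly :: "nat \<Rightarrow> (nat \<Rightarrow> nat) \<Rightarrow> real \<Rightarrow> (nat \<Rightarrow> real) \<Rightarrow> real" where
  "gen_poly m r0 \<rho> x = (\<Sum>X\<in>Pow {1..m-1}. p_set m r0 \<rho> X * (\<Prod>j\<in>X. x j))"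

definition cgf :: "nat \<Rightarrow> (nat \<Rightarrow> nat) \<Rightarrow> real \<Rightarrow> (nat \<Rightarrow> real) \<Rightarrow> real" where
  "cgf m r0 \<rho> t = ln (gen_poly m r0 \<rho> (\<lambda>j. exp (t j)))"

definition saddle_obj :: "nat \<Rightarrow> (nat \<Rightarrow> nat) \<Rightarrow> real \<Rightarrow> (nat \<Rightarrow> real) \<Rightarrow> (nat \<Rightarrow> real) \<Rightarrow> real" where
  "saddle_obj m r0 \<rho> \<beta> t = - cgf m r0 \<rho> t + (\<Sum>j=1..m-1. \<beta> j * t j)"

text \<open>Reference ranking (m, m-1, ..., 1): candidate c at position m+1-c.\<close>
definition ref_rank :: "nat \<Rightarrow> nat \<Rightarrow> nat" where
  "ref_rank m c = (if c \<in> {1..m} then m + 1 - c else c)"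

end

theory Submission
  imports Defs
begin

(* Write W_t(r) = exp (-rho d(r, r0) + sum of t_j over the candidates j above m in r). Up to the
   constant ln Z, the objective is -ln (sum_r W_t(r)) + sum_j t_j / 2. At t = tau the weights are
   invariant under the involution of rankings that exchanges the block of candidates above m with
   the block below m, keeping the order inside each block: the exponent splits into a sum over
   pairs of candidates, and each summand is invariant. As the involution moves every candidate
   j < m to the other side of m, j lies above m with W_tau-probability exactly 1/2, which is the
   first-order condition grad K(tau) = beta. Summing exp y >= 1 + y against W_tau turns it into
   global maximality; strictness of that inequality gives uniqueness, since the rankings r0 and
   r0 composed with the transposition (j m) separate the coordinates. *)

lemma sum_mult_exp_minus_sum:
  fixes w y :: "'a \<Rightarrow> real"
  assumes "(\<Sum>r\<in>R. w r * y r) = 0"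
  shows "(\<Sum>r\<in>R. w r * exp (y r)) - (\<Sum>r\<in>R. w r) = (\<Sum>r\<in>R. w r * (exp (y r) - 1 - y r))"
  using assms by (simp add: sum_subtractf right_diff_distrib)

lemma exp_minus_one_minus_self_nonneg: "0 \<le> exp x - 1 - (x :: real)"
  using exp_ge_add_one_self[of x] by linarith

lemma sum_mult_exp_ge:
  fixes w y :: "'a \<Rightarrow> real"
  assumes "\<And>r. r \<in> R \<Longrightarrow> 0 \<le> w r" and "(\<Sum>r\<in>R. w r * y r) = 0"
  shows "(\<Sum>r\<in>R. w r) \<le> (\<Sum>r\<in>R. w r * exp (y r))"
proof -
  have "0 \<le> (\<Sum>r\<in>R. w r * (exp (y r) - 1 - y r))"
    by (intro sum_nonneg mult_nonneg_nonneg assms(1) exp_minus_one_minus_self_nonneg)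
  then show ?thesis using sum_mult_exp_minus_sum[OF assms(2)] by linarith
qed

lemma sum_mult_exp_eq_imp_eq_0:
  fixes w y :: "'a \<Rightarrow> real"
  assumes "finite R" and "\<And>r. r \<in> R \<Longrightarrow> 0 < w r" and "(\<Sum>r\<in>R. w r * y r) = 0"
    and "(\<Sum>r\<in>R. w r * exp (y r)) = (\<Sum>r\<in>R. w r)" and "r \<in> R"
  shows "y r = 0"
proof -
  have nonneg: "\<forall>r\<in>R. 0 \<le> w r * (exp (y r) - 1 - y r)"
    using assms(2) by (meson less_imp_le mult_nonneg_nonneg exp_minus_one_minus_self_nonneg)
  have "(\<Sum>r\<in>R. w r * (exp (y r) - 1 - y r)) = 0"
    using sum_mult_exp_minus_sum[OF assms(3)] assms(4) by simp
  then have "w r * (exp (y r) - 1 - y r) = 0"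
    using nonneg assms(5) by (simp add: sum_nonneg_eq_0_iff[OF assms(1)])
  then have "ln (exp (y r)) = exp (y r) - 1"
    using assms(2)[OF assms(5)] by auto
  then have "exp (y r) = 1"
    by (rule ln_eq_minus_one[rotated]) simp
  then show ?thesis by simp
qed

lemma sum_pairs_less_diff:
  fixes f :: "nat \<Rightarrow> real"
  shows "(\<Sum>a\<in>{1..n}. \<Sum>b\<in>{1..n}. of_bool (a < b) * (f a - f b))
       = (\<Sum>j\<in>{1..n}. f j * (real n + 1 - 2 * real j))"
proof -
  have later: "{1..n} \<inter> {b. a < b} = {a<..n}" and earlier: "{1..n} \<inter> {b. b < a} = {1..<a}"
    if "a \<in> {1..n}" for a
    using that by auto
  have "(\<Sum>a\<in>{1..n}. \<Sum>b\<in>{1..n}. of_bool (a < b) * (f a - f b))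
      = (\<Sum>a\<in>{1..n}. \<Sum>b\<in>{1..n}. of_bool (a < b) * f a) - (\<Sum>a\<in>{1..n}. \<Sum>b\<in>{1..n}. of_bool (a < b) * f b)"
    by (simp only: right_diff_distrib sum_subtractf)
  also have "(\<Sum>a\<in>{1..n}. \<Sum>b\<in>{1..n}. of_bool (a < b) * f a) = (\<Sum>j\<in>{1..n}. f j * real (n - j))"
    by (intro sum.cong refl) (simp add: sum_distrib_right[symmetric] later[simplified] mult.commute)
  also have "(\<Sum>a\<in>{1..n}. \<Sum>b\<in>{1..n}. of_bool (a < b) * f b) = (\<Sum>j\<in>{1..n}. f j * real (j - 1))"
    by (subst sum.swap, intro sum.cong refl) (simp add: sum_distrib_right[symmetric] earlier[simplified] mult.commute)
  also have "(\<Sum>j\<in>{1..n}. f j * real (n - j)) - (\<Sum>j\<in>{1..n}. f j * real (j - 1))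
      = (\<Sum>j\<in>{1..n}. f j * (real n + 1 - 2 * real j))"
    unfolding sum_subtractf[symmetric] by (intro sum.cong refl) (simp add: of_nat_diff algebra_simps)
  finally show ?thesis .
qed

lemma ref_rank_permutes: "ref_rank m permutes {1..m}"
  by (rule bij_imp_permutes, rule bij_betw_byWitness[where f'="ref_rank m"]) (auto simp: ref_rank_def)

lemma ref_rank_in_rankings: "ref_rank m \<in> rankings m"
  unfolding rankings_def using ref_rank_permutes by simp

lemma finite_rankings: "finite (rankings m)"
  unfolding rankings_def by (rule finite_permutations) simp

lemma rankings_in_range: "r \<in> rankings m \<Longrightarrow> c \<in> {1..m} \<Longrightarrow> r c \<in> {1..m}"
  unfolding rankings_def using permutes_in_image[of r "{1..m}" c] by simp

lemma rankings_inj: "r \<in> rankings m \<Longrightarrow> inj r"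
  unfolding rankings_def by (simp add: permutes_inj)

lemma finite_above_m: "finite (above_m m r)"
  by (simp add: above_m_def)

lemma above_m_ref_rank: "above_m m (ref_rank m) = {}"
  by (auto simp: above_m_def ref_rank_def)

lemma ref_rank_transpose_in_rankings: "j \<in> {1..m-1} \<Longrightarrow> ref_rank m \<circ> transpose j m \<in> rankings m"
  unfolding rankings_def mem_Collect_eq
  by (rule permutes_compose[OF permutes_swap_id ref_rank_permutes]) auto

lemma above_m_ref_rank_transpose:
  "j \<in> {1..m-1} \<Longrightarrow> above_m m (ref_rank m \<circ> transpose j m) = {j..m-1}"
  by (auto simp: above_m_def ref_rank_def transpose_def split: if_splits)

(* Tested on ref_rank m, with nothing above m, and on ref_rank m composed with the transposition
   (j m), with exactly j..m-1 above m. *)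
lemma eq_0_if_sum_above_m_const:
  fixes s :: "nat \<Rightarrow> real"
  assumes "\<And>r. r \<in> rankings m \<Longrightarrow> (\<Sum>j\<in>above_m m r. s j) = c" and "j \<in> {1..m-1}"
  shows "s j = 0"
proof -
  have c: "c = 0"
    using assms(1)[OF ref_rank_in_rankings] by (simp add: above_m_ref_rank)
  have tail: "(\<Sum>i\<in>{k..m-1}. s i) = 0" if "1 \<le> k" for k
  proof (cases "k \<in> {1..m-1}")
    case True
    then show ?thesis
      using assms(1)[OF ref_rank_transpose_in_rankings] c by (simp add: above_m_ref_rank_transpose)
  next
    case False
    then show ?thesis using that by simp
  qed
  have "(\<Sum>i\<in>{j..m-1}. s i) = s j + (\<Sum>i\<in>{Suc j..m-1}. s i)"
    using assms(2) by (simp add: sum.atLeast_Suc_atMost)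
  then show ?thesis using tail[of j] tail[of "Suc j"] assms(2) by simp
qed

(* On positions 1..m: the block 1..k goes to the bottom, slot k+1 to m-k, the block k+2..m to the
   top, each block keeping its internal order. *)
definition block_swap :: "nat \<Rightarrow> nat \<Rightarrow> nat \<Rightarrow> nat" where
  "block_swap m k p = (if p \<le> k then p + m - k else if p = Suc k then m - k else p - k - 1)"

lemma block_swap_in_range: "k < m \<Longrightarrow> p \<in> {1..m} \<Longrightarrow> block_swap m k p \<in> {1..m}"
  unfolding block_swap_def by auto

lemma block_swap_block_swap: "k < m \<Longrightarrow> p \<in> {1..m} \<Longrightarrow> block_swap m (m - k - 1) (block_swap m k p) = p"
  unfolding block_swap_def by auto

lemma bij_betw_block_swap:
  assumes "k < m"
  shows "bij_betw (block_swap m k) {1..m} {1..m}"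
proof (rule bij_betw_byWitness[where f'="block_swap m (m - k - 1)"])
  have k': "m - k - 1 < m" and k'': "m - (m - k - 1) - 1 = k"
    using assms by auto
  show "\<forall>p\<in>{1..m}. block_swap m (m - k - 1) (block_swap m k p) = p"
    using block_swap_block_swap assms by blast
  show "\<forall>p\<in>{1..m}. block_swap m k (block_swap m (m - k - 1) p) = p"
    using block_swap_block_swap[OF k'] k'' by metis
  show "block_swap m k ` {1..m} \<subseteq> {1..m}" "block_swap m (m - k - 1) ` {1..m} \<subseteq> {1..m}"
    using block_swap_in_range assms k' by blast+
qed

definition swap_around_m :: "nat \<Rightarrow> (nat \<Rightarrow> nat) \<Rightarrow> nat \<Rightarrow> nat" where
  "swap_around_m m r c = (if c \<in> {1..m} then block_swap m (r m - 1) (r c) else c)"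

lemma swap_around_m_apply: "c \<in> {1..m} \<Longrightarrow> swap_around_m m r c = block_swap m (r m - 1) (r c)"
  by (simp add: swap_around_m_def)

lemma swap_around_m_in_rankings:
  assumes "r \<in> rankings m" and "m \<ge> 1"
  shows "swap_around_m m r \<in> rankings m"
proof -
  have "r m - 1 < m" using rankings_in_range[OF assms(1), of m] assms(2) by auto
  moreover have "bij_betw r {1..m} {1..m}"
    using assms(1) unfolding rankings_def by (simp add: permutes_imp_bij)
  ultimately have "bij_betw (block_swap m (r m - 1) \<circ> r) {1..m} {1..m}"
    using bij_betw_trans bij_betw_block_swap by blast
  then have "bij_betw (swap_around_m m r) {1..m} {1..m}"
    by (rule bij_betw_cong[THEN iffD1, rotated]) (simp add: swap_around_m_def)
  moreover have "swap_around_m m r c = c" if "c \<notin> {1..m}" for c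
    using that by (auto simp: swap_around_m_def)
  ultimately have "swap_around_m m r permutes {1..m}"
    by (rule bij_imp_permutes)
  then show ?thesis unfolding rankings_def by simp
qed

lemma swap_around_m_at_m: "r \<in> rankings m \<Longrightarrow> m \<ge> 1 \<Longrightarrow> swap_around_m m r m = m + 1 - r m"
  using rankings_in_range[of r m m] unfolding swap_around_m_def block_swap_def by auto

lemma swap_around_m_swap_around_m:
  assumes "r \<in> rankings m" and "m \<ge> 1"
  shows "swap_around_m m (swap_around_m m r) = r"
proof
  fix c
  have rm: "r m \<in> {1..m}" using rankings_in_range assms by auto
  show "swap_around_m m (swap_around_m m r) c = r c"
  proof (cases "c \<in> {1..m}")
    case True
    have k: "r m - 1 < m" and "m - (r m - 1) - 1 = m - r m" using rm by auto
    then show ?thesis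
      using True block_swap_block_swap[OF k rankings_in_range[OF assms(1) True]]
      by (simp add: swap_around_m_def[of m "swap_around_m m r" c] swap_around_m_at_m[OF assms])
        (simp add: swap_around_m_def)
  next
    case False
    then show ?thesis using assms(1) unfolding rankings_def swap_around_m_def permutes_def by auto
  qed
qed

lemma mem_above_m_swap_around_m:
  assumes "r \<in> rankings m" and "j \<in> {1..m-1}"
  shows "j \<in> above_m m (swap_around_m m r) \<longleftrightarrow> j \<notin> above_m m r"
proof -
  have j: "j \<in> {1..m}" "j \<noteq> m" using assms(2) by auto
  have "r j \<in> {1..m}" "r m \<in> {1..m}" "r j \<noteq> r m"
    using rankings_in_range[OF assms(1)] rankings_inj[OF assms(1)] j by (auto dest: injD)
  then have "block_swap m (r m - 1) (r j) < block_swap m (r m - 1) (r m) \<longleftrightarrow> \<not> r j < r m"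
    by (auto simp: block_swap_def)
  then show ?thesis using assms(2) j by (simp add: above_m_def swap_around_m_def)
qed

lemma kendall_tau_ref_rank:
  assumes "m \<ge> 1"
  shows "real (kendall_tau m r (ref_rank m))
       = (\<Sum>a\<in>{1..m-1}. \<Sum>b\<in>{1..m-1}. of_bool (a < b \<and> r a < r b))
         + (\<Sum>a\<in>{1..m-1}. of_bool (r a < r m))"
proof -
  let ?P = "\<lambda>a b. of_bool (a < b \<and> r a < r b) :: real"
  have "{(a, b). a \<in> {1..m} \<and> b \<in> {1..m} \<and> a < b \<and> ((r a < r b) \<noteq> (ref_rank m a < ref_rank m b))}
      = ({1..m} \<times> {1..m}) \<inter> {(a, b). a < b \<and> r a < r b}"
    by (auto simp: ref_rank_def)
  then have "real (kendall_tau m r (ref_rank m)) = (\<Sum>a\<in>{1..m}. \<Sum>b\<in>{1..m}. ?P a b)"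
    unfolding kendall_tau_def sum.cartesian_product by (simp add: case_prod_beta')
  also have "{1..m} = insert m {1..m-1}"
    using assms by auto
  also have "(\<Sum>a\<in>insert m {1..m-1}. \<Sum>b\<in>insert m {1..m-1}. ?P a b)
      = (\<Sum>a\<in>{1..m-1}. \<Sum>b\<in>{1..m-1}. ?P a b) + (\<Sum>a\<in>{1..m-1}. of_bool (r a < r m))"
  proof -
    have "(\<Sum>b\<in>{1..m-1}. ?P m b) = 0" and "(\<Sum>a\<in>{1..m-1}. ?P a m) = (\<Sum>a\<in>{1..m-1}. of_bool (r a < r m))"
      by (auto intro!: sum.neutral sum.cong simp del: sum_of_bool_eq)
    then show ?thesis
      using assms by (simp add: sum.distrib del: sum_of_bool_eq)
  qed
  finally show ?thesis .
qed

definition tilted_weight :: "nat \<Rightarrow> real \<Rightarrow> (nat \<Rightarrow> real) \<Rightarrow> (nat \<Rightarrow> nat) \<Rightarrow> real" where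
  "tilted_weight m \<rho> t r = exp (- \<rho> * real (kendall_tau m r (ref_rank m)) + (\<Sum>j\<in>above_m m r. t j))"

lemma tilted_weight_pos: "0 < tilted_weight m \<rho> t r"
  by (simp add: tilted_weight_def)

lemma sum_tilted_weight_pos: "0 < (\<Sum>r\<in>rankings m. tilted_weight m \<rho> t r)"
  using ref_rank_in_rankings by (intro sum_pos finite_rankings tilted_weight_pos) blast

lemma tilted_weight_shift:
  "tilted_weight m \<rho> t r = tilted_weight m \<rho> u r * exp (\<Sum>j\<in>above_m m r. t j - u j)"
  by (simp add: tilted_weight_def sum_subtractf flip: exp_add)

definition log_saddle_point :: "nat \<Rightarrow> real \<Rightarrow> nat \<Rightarrow> real" where
  "log_saddle_point m \<rho> j = (real m - 2 * (real j - 1)) * \<rho> / 2"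

definition pair_score :: "nat \<Rightarrow> nat \<Rightarrow> nat \<Rightarrow> real" where
  "pair_score pa pb pm = (of_bool (pa < pm) - of_bool (pb < pm)) / 2 - of_bool (pa < pb)"

lemma pair_score_block_swap:
  assumes "pa \<in> {1..m}" "pb \<in> {1..m}" "pm \<in> {1..m}" "pa \<noteq> pb" "pa \<noteq> pm" "pb \<noteq> pm"
  shows "pair_score (block_swap m (pm - 1) pa) (block_swap m (pm - 1) pb) (block_swap m (pm - 1) pm)
       = pair_score pa pb pm"
proof -
  have swap: "block_swap m (pm - 1) p = (if p < pm then p + m + 1 - pm else p - pm)"
    if "p \<in> {1..m}" "p \<noteq> pm" for p
    using that assms(3) by (auto simp: block_swap_def)
  have swap_m: "block_swap m (pm - 1) pm = m + 1 - pm"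
    using assms(3) by (auto simp: block_swap_def)
  have flip_m: "block_swap m (pm - 1) p < block_swap m (pm - 1) pm \<longleftrightarrow> \<not> p < pm"
    if "p \<in> {1..m}" "p \<noteq> pm" for p
    using that assms(3) unfolding swap[OF that] swap_m by auto
  have "block_swap m (pm - 1) pa < block_swap m (pm - 1) pb
      \<longleftrightarrow> (if (pa < pm) = (pb < pm) then pa < pb else pb < pm)"
    using assms unfolding swap[OF assms(1,5)] swap[OF assms(2,6)] by auto
  then show ?thesis
    unfolding pair_score_def flip_m[OF assms(1,5)] flip_m[OF assms(2,6)]
    by (cases "pa < pm"; cases "pb < pm"; cases "pa < pb"; simp)
qed

lemma tilted_weight_log_saddle_point:
  assumes "m \<ge> 1"
  shows "tilted_weight m \<rho> (log_saddle_point m \<rho>) r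
       = exp (\<rho> * (\<Sum>a\<in>{1..m-1}. \<Sum>b\<in>{1..m-1}. of_bool (a < b) * pair_score (r a) (r b) (r m)))"
proof -
  let ?A = "{1..m-1}" and ?I = "\<lambda>j. of_bool (r j < r m) :: real"
  have "above_m m r = ?A \<inter> {j. r j < r m}"
    by (auto simp: above_m_def)
  then have above: "(\<Sum>j\<in>above_m m r. log_saddle_point m \<rho> j) = (\<Sum>j\<in>?A. ?I j * log_saddle_point m \<rho> j)"
    by (simp add: sum_of_bool_mult_eq)
  have "(\<Sum>a\<in>?A. \<Sum>b\<in>?A. of_bool (a < b) * pair_score (r a) (r b) (r m))
      = (\<Sum>a\<in>?A. \<Sum>b\<in>?A. of_bool (a < b) * (?I a - ?I b)) / 2
        - (\<Sum>a\<in>?A. \<Sum>b\<in>?A. of_bool (a < b \<and> r a < r b))"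
    by (simp add: pair_score_def sum_divide_distrib diff_divide_distrib sum_subtractf right_diff_distrib of_bool_conj
        del: sum_of_bool_eq sum_mult_of_bool_eq sum_of_bool_mult_eq)
  also have "(\<Sum>a\<in>?A. \<Sum>b\<in>?A. of_bool (a < b) * (?I a - ?I b)) = (\<Sum>j\<in>?A. ?I j * (real m - 2 * real j))"
    using sum_pairs_less_diff[of ?I "m - 1"] assms by (simp add: of_nat_diff)
  finally have pairs: "(\<Sum>a\<in>?A. \<Sum>b\<in>?A. of_bool (a < b) * pair_score (r a) (r b) (r m))
      = (\<Sum>j\<in>?A. ?I j * (real m - 2 * real j)) / 2 - (\<Sum>a\<in>?A. \<Sum>b\<in>?A. of_bool (a < b \<and> r a < r b))" .
  have "(\<Sum>j\<in>?A. ?I j * log_saddle_point m \<rho> j)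
      = \<rho> / 2 * (\<Sum>j\<in>?A. ?I j * (real m - 2 * real j)) + \<rho> * (\<Sum>j\<in>?A. ?I j)"
    unfolding sum_distrib_left sum.distrib[symmetric]
    by (intro sum.cong refl) (simp add: log_saddle_point_def field_simps)
  then show ?thesis
    unfolding tilted_weight_def kendall_tau_ref_rank[OF assms] above pairs
    by (simp add: algebra_simps del: sum_of_bool_eq sum_mult_of_bool_eq sum_of_bool_mult_eq)
qed

lemma tilted_weight_swap_around_m:
  assumes "r \<in> rankings m" and "m \<ge> 1"
  shows "tilted_weight m \<rho> (log_saddle_point m \<rho>) (swap_around_m m r)
       = tilted_weight m \<rho> (log_saddle_point m \<rho>) r"
proof -
  let ?s = "swap_around_m m r"
  have "of_bool (a < b) * pair_score (?s a) (?s b) (?s m) = of_bool (a < b) * pair_score (r a) (r b) (r m)"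
    if "a \<in> {1..m-1}" "b \<in> {1..m-1}" for a b
  proof (cases "a < b")
    case True
    have in_range: "a \<in> {1..m}" "b \<in> {1..m}" "m \<in> {1..m}"
      using that assms(2) by auto
    have "r a \<noteq> r b" "r a \<noteq> r m" "r b \<noteq> r m"
      using True that inj_eq[OF rankings_inj[OF assms(1)]] by auto
    then have "pair_score (block_swap m (r m - 1) (r a)) (block_swap m (r m - 1) (r b))
        (block_swap m (r m - 1) (r m)) = pair_score (r a) (r b) (r m)"
      using in_range by (intro pair_score_block_swap rankings_in_range[OF assms(1)])
    then show ?thesis
      using in_range by (simp add: swap_around_m_apply)
  qed simp
  then show ?thesis
    unfolding tilted_weight_log_saddle_point[OF assms(2)] by (intro arg_cong[where f = exp] sum.cong refl) simp
qed

lemma sum_tilted_weight_mem_above_m: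
  assumes "m \<ge> 1" and "j \<in> {1..m-1}"
  shows "(\<Sum>r\<in>rankings m. tilted_weight m \<rho> (log_saddle_point m \<rho>) r * of_bool (j \<in> above_m m r))
       = (\<Sum>r\<in>rankings m. tilted_weight m \<rho> (log_saddle_point m \<rho>) r) / 2"
proof -
  let ?W = "tilted_weight m \<rho> (log_saddle_point m \<rho>)"
  have "(\<Sum>r\<in>rankings m. ?W r * of_bool (j \<in> above_m m r))
      = (\<Sum>r\<in>rankings m. ?W r * of_bool (j \<notin> above_m m r))"
    by (rule sum.reindex_bij_witness[where i = "swap_around_m m" and j = "swap_around_m m"])
      (auto simp: swap_around_m_swap_around_m[OF _ assms(1)] swap_around_m_in_rankings[OF _ assms(1)]
        tilted_weight_swap_around_m[OF _ assms(1)] mem_above_m_swap_around_m[OF _ assms(2)])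
  moreover have "(\<Sum>r\<in>rankings m. ?W r * of_bool (j \<in> above_m m r))
      + (\<Sum>r\<in>rankings m. ?W r * of_bool (j \<notin> above_m m r)) = (\<Sum>r\<in>rankings m. ?W r)"
    by (simp only: sum.distrib[symmetric] distrib_left[symmetric]) (auto intro: sum.cong)
  ultimately show ?thesis by simp
qed

lemma sum_tilted_weight_centered:
  fixes s :: "nat \<Rightarrow> real"
  assumes "m \<ge> 1"
  shows "(\<Sum>r\<in>rankings m. tilted_weight m \<rho> (log_saddle_point m \<rho>) r
           * ((\<Sum>j\<in>above_m m r. s j) - (\<Sum>j\<in>{1..m-1}. s j) / 2)) = 0"
proof -
  let ?W = "tilted_weight m \<rho> (log_saddle_point m \<rho>)" and ?A = "{1..m-1}"
  have above: "(\<Sum>j\<in>above_m m r. s j) = (\<Sum>j\<in>?A. s j * of_bool (j \<in> above_m m r))" for r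
  proof -
    have "above_m m r = ?A \<inter> {j. j \<in> above_m m r}"
      by (auto simp: above_m_def)
    then show ?thesis by (simp add: sum_mult_of_bool_eq)
  qed
  have "(\<Sum>r\<in>rankings m. ?W r * (\<Sum>j\<in>above_m m r. s j))
      = (\<Sum>j\<in>?A. s j * (\<Sum>r\<in>rankings m. ?W r * of_bool (j \<in> above_m m r)))"
    unfolding above sum_distrib_left by (subst sum.swap) (simp add: algebra_simps)
  also have "\<dots> = (\<Sum>j\<in>?A. s j) / 2 * (\<Sum>r\<in>rankings m. ?W r)"
    by (simp add: sum_tilted_weight_mem_above_m[OF assms] sum_distrib_right)
  also have "\<dots> = (\<Sum>r\<in>rankings m. ?W r * ((\<Sum>j\<in>?A. s j) / 2))"
    by (simp only: mult.commute[of "(\<Sum>j\<in>?A. s j) / 2"] sum_distrib_right)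
  finally show ?thesis
    by (simp add: right_diff_distrib sum_subtractf)
qed

lemma gen_poly_ref_rank_exp:
  "gen_poly m (ref_rank m) \<rho> (\<lambda>j. exp (t j))
     = (\<Sum>r\<in>rankings m. tilted_weight m \<rho> t r) / (\<Sum>r\<in>rankings m. tilted_weight m \<rho> (\<lambda>_. 0) r)"
proof -
  let ?f = "\<lambda>r. mallows_prob m (ref_rank m) \<rho> r * (\<Prod>j\<in>above_m m r. exp (t j))"
  have "gen_poly m (ref_rank m) \<rho> (\<lambda>j. exp (t j))
      = (\<Sum>X\<in>Pow {1..m-1}. \<Sum>r\<in>{r \<in> rankings m. above_m m r = X}. ?f r)"
    unfolding gen_poly_def p_set_def sum_distrib_right by (intro sum.cong refl) auto
  also have "\<dots> = (\<Sum>r\<in>rankings m. ?f r)"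
    by (rule sum.group) (auto simp: finite_rankings above_m_def)
  also have "\<dots> = (\<Sum>r\<in>rankings m. tilted_weight m \<rho> t r / (\<Sum>r\<in>rankings m. tilted_weight m \<rho> (\<lambda>_. 0) r))"
    by (intro sum.cong refl)
      (unfold mallows_prob_def tilted_weight_def exp_add exp_sum[OF finite_above_m], simp)
  finally show ?thesis by (simp add: sum_divide_distrib)
qed

lemma saddle_obj_ref_rank:
  "saddle_obj m (ref_rank m) \<rho> (\<lambda>_. 1/2) t
     = ln (\<Sum>r\<in>rankings m. tilted_weight m \<rho> (\<lambda>_. 0) r) - ln (\<Sum>r\<in>rankings m. tilted_weight m \<rho> t r)
       + (\<Sum>j\<in>{1..m-1}. t j) / 2"
  using sum_tilted_weight_pos[of m \<rho> t] sum_tilted_weight_pos[of m \<rho> "\<lambda>_. 0"]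
  unfolding saddle_obj_def cgf_def gen_poly_ref_rank_exp by (simp add: ln_div, simp add: sum_divide_distrib[symmetric])

lemma saddle_obj_ref_rank_diff:
  fixes m :: nat and u t :: "nat \<Rightarrow> real"
  defines "y \<equiv> \<lambda>r. (\<Sum>j\<in>above_m m r. t j - u j) - (\<Sum>j\<in>{1..m-1}. t j - u j) / 2"
  shows "saddle_obj m (ref_rank m) \<rho> (\<lambda>_. 1/2) u - saddle_obj m (ref_rank m) \<rho> (\<lambda>_. 1/2) t
       = ln (\<Sum>r\<in>rankings m. tilted_weight m \<rho> u r * exp (y r)) - ln (\<Sum>r\<in>rankings m. tilted_weight m \<rho> u r)"
proof -
  let ?\<sigma> = "\<Sum>j\<in>{1..m-1}. t j - u j"
  have "(\<Sum>r\<in>rankings m. tilted_weight m \<rho> u r * exp (y r))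
      = (\<Sum>r\<in>rankings m. tilted_weight m \<rho> t r) * exp (- ?\<sigma> / 2)"
    unfolding y_def sum_distrib_right tilted_weight_shift[of m \<rho> t _ u]
    by (intro sum.cong refl) (simp add: mult.assoc flip: exp_add)
  then have "ln (\<Sum>r\<in>rankings m. tilted_weight m \<rho> u r * exp (y r))
      = ln (\<Sum>r\<in>rankings m. tilted_weight m \<rho> t r) - ?\<sigma> / 2"
    using sum_tilted_weight_pos[of m \<rho> t] by (simp add: ln_mult)
  then show ?thesis
    unfolding saddle_obj_ref_rank by (simp add: sum_subtractf field_simps)
qed

lemma saddle_obj_le_log_saddle_point:
  assumes "m \<ge> 1"
  shows "saddle_obj m (ref_rank m) \<rho> (\<lambda>_. 1/2) t \<le> saddle_obj m (ref_rank m) \<rho> (\<lambda>_. 1/2) (log_saddle_point m \<rho>)"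
proof -
  let ?\<tau> = "log_saddle_point m \<rho>"
  let ?W = "tilted_weight m \<rho> ?\<tau>"
  define y where "y r = (\<Sum>j\<in>above_m m r. t j - ?\<tau> j) - (\<Sum>j\<in>{1..m-1}. t j - ?\<tau> j) / 2" for r
  have "(\<Sum>r\<in>rankings m. ?W r) \<le> (\<Sum>r\<in>rankings m. ?W r * exp (y r))"
    using sum_tilted_weight_centered[OF assms, of \<rho> "\<lambda>j. t j - ?\<tau> j"]
    by (intro sum_mult_exp_ge) (simp_all add: less_imp_le tilted_weight_pos y_def)
  then have "ln (\<Sum>r\<in>rankings m. ?W r) \<le> ln (\<Sum>r\<in>rankings m. ?W r * exp (y r))"
    using sum_tilted_weight_pos[of m \<rho> ?\<tau>] by (simp add: ln_le_cancel_iff)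
  then show ?thesis
    using saddle_obj_ref_rank_diff[where m = m and \<rho> = \<rho> and u = ?\<tau> and t = t, folded y_def]
    by linarith
qed

lemma saddle_obj_eq_log_saddle_point_imp_eq:
  assumes "m \<ge> 1"
    and "saddle_obj m (ref_rank m) \<rho> (\<lambda>_. 1/2) t = saddle_obj m (ref_rank m) \<rho> (\<lambda>_. 1/2) (log_saddle_point m \<rho>)"
    and "j \<in> {1..m-1}"
  shows "t j = log_saddle_point m \<rho> j"
proof -
  let ?\<tau> = "log_saddle_point m \<rho>"
  let ?W = "tilted_weight m \<rho> ?\<tau>"
  define s where "s j = t j - ?\<tau> j" for j
  define y where "y r = (\<Sum>j\<in>above_m m r. s j) - (\<Sum>j\<in>{1..m-1}. s j) / 2" for r
  have centered: "(\<Sum>r\<in>rankings m. ?W r * y r) = 0"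
    unfolding y_def by (rule sum_tilted_weight_centered[OF assms(1)])
  have "ln (\<Sum>r\<in>rankings m. ?W r * exp (y r)) = ln (\<Sum>r\<in>rankings m. ?W r)"
    using saddle_obj_ref_rank_diff[where m = m and \<rho> = \<rho> and u = ?\<tau> and t = t] assms(2) by (simp add: y_def s_def)
  moreover have "0 < (\<Sum>r\<in>rankings m. ?W r * exp (y r))"
    using ref_rank_in_rankings by (intro sum_pos finite_rankings) (auto simp: tilted_weight_pos)
  ultimately have "(\<Sum>r\<in>rankings m. ?W r * exp (y r)) = (\<Sum>r\<in>rankings m. ?W r)"
    using sum_tilted_weight_pos[of m \<rho> ?\<tau>] by simp
  then have "y r = 0" if "r \<in> rankings m" for r
    using sum_mult_exp_eq_imp_eq_0[OF finite_rankings _ centered _ that] tilted_weight_pos by blast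
  then have "s j = 0"
    by (intro eq_0_if_sum_above_m_const[OF _ assms(3), where c = "(\<Sum>j\<in>{1..m-1}. s j) / 2"])
      (simp add: y_def)
  then show ?thesis by (simp add: s_def)
qed

theorem lemma3:
  fixes m :: nat and \<rho> :: real
  assumes "m \<ge> 2" and "\<rho> \<ge> 0"
  defines "\<tau> \<equiv> (\<lambda>j. (real m - 2 * (real j - 1)) * \<rho> / 2)"
  shows "(\<forall>t. saddle_obj m (ref_rank m) \<rho> (\<lambda>_. 1/2) t
              \<le> saddle_obj m (ref_rank m) \<rho> (\<lambda>_. 1/2) \<tau>)
       \<and> (\<forall>t. saddle_obj m (ref_rank m) \<rho> (\<lambda>_. 1/2) t
              = saddle_obj m (ref_rank m) \<rho> (\<lambda>_. 1/2) \<tau>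
              \<longrightarrow> (\<forall>j\<in>{1..m-1}. t j = \<tau> j))"
proof -
  have "\<tau> = log_saddle_point m \<rho>"
    by (simp add: \<tau>_def log_saddle_point_def fun_eq_iff)
  moreover have "m \<ge> 1"
    using assms(1) by simp
  ultimately show ?thesis
    using saddle_obj_le_log_saddle_point saddle_obj_eq_log_saddle_point_imp_eq by blast
qed

end
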